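(* Let $1<w\le 2$, $h>1$, $k\ge 2$, and let $\frac12\le y_1<\dots<y_n\le h-\frac12$ be uniformly spaced with $y_{i+1}-y_i=\frac1k$ for all $i$. Let $(\mathbf x,\prec)$ be a $\frac1k$-reasonable layout of this instance. For every bad square $s_i$ that is not a standard bad square, at least one of its neighbours $s_{i-1}$, $s_{i+1}$ (those that exist) is a standard bad square.
   Context: The instance is the strip $T=[0,w]\times[0,h]$ with the given $y_i$. A layout is a pair $(\mathbf x,\prec)$ where $\mathbf x=(x_1,\dots,x_n)$ with $x_i\in[\frac12,w-\frac12]$, and $\prec$ is a total order on the squares $s_1,\dots,s_n$, where $s_i$ is the closed axis-parallel unit square with centre $(x_i,y_i)$. If $s_i\prec s_j$ we say $s_j$ is in front of $s_i$ and $s_i$ is behind $s_j$. A point $p$ on the boundary of $s_i$ is visible if every square $s_j$ ($j\neq i$) containing $p$ is behind $s_i$, and covered otherwise. The visible perimeter of $s_i$ is the total length of its visible boundary points; the gap of $s_i$ is its visible perimeter minus $2$, the gap of a layout is the minimum gap of its squares, and a layout is $\varepsilon$-reasonable if its gap is larger than $\varepsilon$. A bad square is a square with at least two of its four corners covered; a standard bad square is a bad square one of whose vertical sides is entirely covered. *)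

theory Defs
  imports "HOL-Analysis.Analysis"
begin

text \<open>Squares are indexed by 0..<n (the paper uses 1..n). Square i has centre (x i, y i).
  The depth order is a strict total order prec on {0..<n}; prec j i means s_j is behind s_i.\<close>

definition strict_total_order_on :: "nat set \<Rightarrow> (nat \<Rightarrow> nat \<Rightarrow> bool) \<Rightarrow> bool" where
  "strict_total_order_on I r \<longleftrightarrow>
     (\<forall>i\<in>I. \<not> r i i) \<and>
     (\<forall>i\<in>I. \<forall>j\<in>I. \<forall>l\<in>I. r i j \<longrightarrow> r j l \<longrightarrow> r i l) \<and>
     (\<forall>i\<in>I. \<forall>j\<in>I. i \<noteq> j \<longrightarrow> r i j \<or> r j i)"

definition sq :: "(nat \<Rightarrow> real) \<Rightarrow> (nat \<Rightarrow> real) \<Rightarrow> nat \<Rightarrow> (real \<times> real) set" where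
  "sq x y i = cbox (x i - 1/2, y i - 1/2) (x i + 1/2, y i + 1/2)"

definition visible ::
  "nat \<Rightarrow> (nat \<Rightarrow> real) \<Rightarrow> (nat \<Rightarrow> real) \<Rightarrow> (nat \<Rightarrow> nat \<Rightarrow> bool) \<Rightarrow> nat \<Rightarrow> real \<times> real \<Rightarrow> bool" where
  "visible n x y prec i p \<longleftrightarrow> p \<in> frontier (sq x y i) \<and>
     (\<forall>j<n. j \<noteq> i \<longrightarrow> p \<in> sq x y j \<longrightarrow> prec j i)"

definition covered ::
  "nat \<Rightarrow> (nat \<Rightarrow> real) \<Rightarrow> (nat \<Rightarrow> real) \<Rightarrow> (nat \<Rightarrow> nat \<Rightarrow> bool) \<Rightarrow> nat \<Rightarrow> real \<times> real \<Rightarrow> bool" where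
  "covered n x y prec i p \<longleftrightarrow> p \<in> frontier (sq x y i) \<and> \<not> visible n x y prec i p"

definition bottom_side :: "(nat \<Rightarrow> real) \<Rightarrow> (nat \<Rightarrow> real) \<Rightarrow> nat \<Rightarrow> real \<Rightarrow> real \<times> real" where
  "bottom_side x y i t = (x i - 1/2 + t, y i - 1/2)"
definition top_side :: "(nat \<Rightarrow> real) \<Rightarrow> (nat \<Rightarrow> real) \<Rightarrow> nat \<Rightarrow> real \<Rightarrow> real \<times> real" where
  "top_side x y i t = (x i - 1/2 + t, y i + 1/2)"
definition left_side :: "(nat \<Rightarrow> real) \<Rightarrow> (nat \<Rightarrow> real) \<Rightarrow> nat \<Rightarrow> real \<Rightarrow> real \<times> real" where
  "left_side x y i t = (x i - 1/2, y i - 1/2 + t)"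
definition right_side :: "(nat \<Rightarrow> real) \<Rightarrow> (nat \<Rightarrow> real) \<Rightarrow> nat \<Rightarrow> real \<Rightarrow> real \<times> real" where
  "right_side x y i t = (x i + 1/2, y i - 1/2 + t)"

text \<open>Visible perimeter: total length of visible boundary points (corners have measure zero,
  so summing over the four closed sides is the length of the visible part of the boundary).\<close>
definition visible_perimeter ::
  "nat \<Rightarrow> (nat \<Rightarrow> real) \<Rightarrow> (nat \<Rightarrow> real) \<Rightarrow> (nat \<Rightarrow> nat \<Rightarrow> bool) \<Rightarrow> nat \<Rightarrow> real" where
  "visible_perimeter n x y prec i =
     measure lebesgue {t \<in> {0..1}. visible n x y prec i (bottom_side x y i t)} +
     measure lebesgue {t \<in> {0..1}. visible n x y prec i (top_side x y i t)} +
     measure lebesgue {t \<in> {0..1}. visible n x y prec i (left_side x y i t)} +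
     measure lebesgue {t \<in> {0..1}. visible n x y prec i (right_side x y i t)}"

definition square_gap ::
  "nat \<Rightarrow> (nat \<Rightarrow> real) \<Rightarrow> (nat \<Rightarrow> real) \<Rightarrow> (nat \<Rightarrow> nat \<Rightarrow> bool) \<Rightarrow> nat \<Rightarrow> real" where
  "square_gap n x y prec i = visible_perimeter n x y prec i - 2"

definition layout_gap ::
  "nat \<Rightarrow> (nat \<Rightarrow> real) \<Rightarrow> (nat \<Rightarrow> real) \<Rightarrow> (nat \<Rightarrow> nat \<Rightarrow> bool) \<Rightarrow> real" where
  "layout_gap n x y prec = Min (square_gap n x y prec ` {0..<n})"

definition reasonable ::
  "real \<Rightarrow> nat \<Rightarrow> (nat \<Rightarrow> real) \<Rightarrow> (nat \<Rightarrow> real) \<Rightarrow> (nat \<Rightarrow> nat \<Rightarrow> bool) \<Rightarrow> bool" where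
  "reasonable \<epsilon> n x y prec \<longleftrightarrow> layout_gap n x y prec > \<epsilon>"

definition is_layout ::
  "real \<Rightarrow> nat \<Rightarrow> (nat \<Rightarrow> real) \<Rightarrow> (nat \<Rightarrow> nat \<Rightarrow> bool) \<Rightarrow> bool" where
  "is_layout w n x prec \<longleftrightarrow> (\<forall>i<n. 1/2 \<le> x i \<and> x i \<le> w - 1/2) \<and> strict_total_order_on {0..<n} prec"

definition corners :: "(nat \<Rightarrow> real) \<Rightarrow> (nat \<Rightarrow> real) \<Rightarrow> nat \<Rightarrow> (real \<times> real) set" where
  "corners x y i = {(x i - 1/2, y i - 1/2), (x i + 1/2, y i - 1/2),
                    (x i - 1/2, y i + 1/2), (x i + 1/2, y i + 1/2)}"

definition bad_square ::
  "nat \<Rightarrow> (nat \<Rightarrow> real) \<Rightarrow> (nat \<Rightarrow> real) \<Rightarrow> (nat \<Rightarrow> nat \<Rightarrow> bool) \<Rightarrow> nat \<Rightarrow> bool" where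
  "bad_square n x y prec i \<longleftrightarrow> card {c \<in> corners x y i. covered n x y prec i c} \<ge> 2"

definition standard_bad_square ::
  "nat \<Rightarrow> (nat \<Rightarrow> real) \<Rightarrow> (nat \<Rightarrow> real) \<Rightarrow> (nat \<Rightarrow> nat \<Rightarrow> bool) \<Rightarrow> nat \<Rightarrow> bool" where
  "standard_bad_square n x y prec i \<longleftrightarrow> bad_square n x y prec i \<and>
     ((\<forall>t\<in>{0..1}. covered n x y prec i (left_side x y i t)) \<or>
      (\<forall>t\<in>{0..1}. covered n x y prec i (right_side x y i t)))"

end

theory Submission
  imports Defs
begin

text \<open>Since \<open>w \<le> 2\<close>, any two squares overlap horizontally. So if two squares in
  front of \<open>s b\<close> lie one above and one below it, at vertical distance at most 1 from each
  other, then either they lie on the same side of \<open>s b\<close> and together cover that vertical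
  side, or they lie on opposite sides and leave visible perimeter at most 2. If both lie above
  \<open>s b\<close>, within distance 1 and on opposite sides, they hide its top side, and the visible
  perimeter is at most 1 plus their two height offsets.

  A covered top corner of \<open>s i\<close> is covered by some \<open>s j\<close> in front with \<open>j > i\<close> and
  \<open>y j \<le> y i + 1\<close>. If \<open>s (i+1)\<close> is behind \<open>s i\<close>, it is sandwiched between \<open>s i\<close> and \<open>s j\<close>,
  hence standard. Symmetrically for bottom corners and \<open>s (i-1)\<close>. Thus if a top and a bottom
  corner are covered and neither neighbour is standard, both neighbours are in front and \<open>s i\<close>
  itself is standard. If both top corners are covered and \<open>s (i+1)\<close> is in front, then
  \<open>s (i+1)\<close> and the square covering the opposite top corner bound the visible perimeter by
  \<open>2 + 1/k\<close>, contradicting \<open>1/k\<close>-reasonableness; likewise for the bottom corners.\<close>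

lemma mem_sq_iff:
  "(p1, p2) \<in> sq x y j \<longleftrightarrow>
     x j - 1/2 \<le> p1 \<and> p1 \<le> x j + 1/2 \<and> y j - 1/2 \<le> p2 \<and> p2 \<le> y j + 1/2"
  by (auto simp: sq_def cbox_Pair_eq)

lemma frontier_sq_iff:
  "(p1, p2) \<in> frontier (sq x y j) \<longleftrightarrow> (p1, p2) \<in> sq x y j \<and>
     \<not> (x j - 1/2 < p1 \<and> p1 < x j + 1/2 \<and> y j - 1/2 < p2 \<and> p2 < y j + 1/2)"
  unfolding sq_def frontier_cbox by (auto simp: mem_box Basis_prod_def)

lemma left_side_in_frontier: "t \<in> {0..1} \<Longrightarrow> left_side x y j t \<in> frontier (sq x y j)"
  by (simp add: left_side_def frontier_sq_iff mem_sq_iff)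

lemma right_side_in_frontier: "t \<in> {0..1} \<Longrightarrow> right_side x y j t \<in> frontier (sq x y j)"
  by (simp add: right_side_def frontier_sq_iff mem_sq_iff)

lemma measure_le_if_subset_interval:
  assumes "S \<subseteq> {a..b}" "a \<le> b"
  shows "measure lebesgue S \<le> b - (a::real)"
proof (cases "S \<in> sets lebesgue")
  case True
  then have "measure lebesgue S \<le> measure lebesgue {a..b}"
    using assms by (intro measure_mono_fmeasurable) auto
  then show ?thesis using assms by simp
qed (use assms in \<open>simp add: measure_notin_sets\<close>)

lemma visible_perimeter_le:
  assumes "{t\<in>{0..1}. visible n x y prec b (bottom_side x y b t)} \<subseteq> {a1..b1}" "a1 \<le> b1"
    and "{t\<in>{0..1}. visible n x y prec b (top_side x y b t)} \<subseteq> {a2..b2}" "a2 \<le> b2"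
    and "{t\<in>{0..1}. visible n x y prec b (left_side x y b t)} \<subseteq> {a3..b3}" "a3 \<le> b3"
    and "{t\<in>{0..1}. visible n x y prec b (right_side x y b t)} \<subseteq> {a4..b4}" "a4 \<le> b4"
  shows "visible_perimeter n x y prec b \<le> (b1 - a1) + (b2 - a2) + (b3 - a3) + (b4 - a4)"
  unfolding visible_perimeter_def
  using measure_le_if_subset_interval[OF assms(1,2)] measure_le_if_subset_interval[OF assms(3,4)]
    measure_le_if_subset_interval[OF assms(5,6)] measure_le_if_subset_interval[OF assms(7,8)]
  by linarith

lemma standard_bad_squareI:
  assumes "(\<forall>t\<in>{0..1}. covered n x y prec b (left_side x y b t)) \<or>
           (\<forall>t\<in>{0..1}. covered n x y prec b (right_side x y b t))"
  shows "standard_bad_square n x y prec b"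
proof -
  obtain s where "covered n x y prec b (s, y b - 1/2)" "covered n x y prec b (s, y b + 1/2)"
    and "s = x b - 1/2 \<or> s = x b + 1/2"
    using assms
  proof (elim disjE)
    assume "\<forall>t\<in>{0..1}. covered n x y prec b (left_side x y b t)"
    from this[rule_format, of 0] this[rule_format, of 1] show thesis
      by (intro that[of "x b - 1/2"]) (simp_all add: left_side_def add.commute)
  next
    assume "\<forall>t\<in>{0..1}. covered n x y prec b (right_side x y b t)"
    from this[rule_format, of 0] this[rule_format, of 1] show thesis
      by (intro that[of "x b + 1/2"]) (simp_all add: right_side_def add.commute)
  qed
  then have "{(s, y b - 1/2), (s, y b + 1/2)} \<subseteq> {c \<in> corners x y b. covered n x y prec b c}"
    by (auto simp: corners_def)
  moreover have "finite (corners x y b)" by (simp add: corners_def)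
  ultimately have "card {(s, y b - 1/2), (s, y b + 1/2)} \<le> card {c \<in> corners x y b. covered n x y prec b c}"
    by (intro card_mono) auto
  then show ?thesis using assms unfolding standard_bad_square_def bad_square_def by simp
qed

lemma bad_square_corner_cases:
  assumes "bad_square n x y prec i"
  obtains (top_bottom) c c' where "covered n x y prec i (c, y i + 1/2)" "covered n x y prec i (c', y i - 1/2)"
  | (top) "covered n x y prec i (x i - 1/2, y i + 1/2)" "covered n x y prec i (x i + 1/2, y i + 1/2)"
  | (bottom) "covered n x y prec i (x i - 1/2, y i - 1/2)" "covered n x y prec i (x i + 1/2, y i - 1/2)"
proof -
  let ?S = "{c \<in> corners x y i. covered n x y prec i c}"
  have "finite ?S" by (simp add: corners_def)
  moreover have "\<not> card ?S \<le> Suc 0" using assms by (simp add: bad_square_def)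
  ultimately obtain p q where "p \<in> ?S" "q \<in> ?S" "p \<noteq> q"
    using card_le_Suc0_iff_eq by blast
  then show thesis using that by (auto simp: corners_def)
qed

locale narrow_layout =
  fixes n :: nat and x y :: "nat \<Rightarrow> real" and prec :: "nat \<Rightarrow> nat \<Rightarrow> bool"
  assumes order: "strict_total_order_on {0..<n} prec"
    and x_dist: "\<lbrakk>i < n; j < n\<rbrakk> \<Longrightarrow> x i - x j \<le> 1"
begin

lemma prec_irrefl: "i < n \<Longrightarrow> \<not> prec i i"
  using order by (simp add: strict_total_order_on_def)

lemma prec_trans: "\<lbrakk>i < n; j < n; l < n; prec i j; prec j l\<rbrakk> \<Longrightarrow> prec i l"
  using order unfolding strict_total_order_on_def by (meson atLeastLessThan_iff zero_le)

lemma prec_total: "\<lbrakk>i < n; j < n; i \<noteq> j; \<not> prec i j\<rbrakk> \<Longrightarrow> prec j i"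
  using order unfolding strict_total_order_on_def by (meson atLeastLessThan_iff zero_le)

lemma covered_iff_in_front:
  assumes "b < n"
  shows "covered n x y prec b p \<longleftrightarrow>
    p \<in> frontier (sq x y b) \<and> (\<exists>j<n. j \<noteq> b \<and> prec b j \<and> p \<in> sq x y j)"
  using assms prec_irrefl prec_trans prec_total unfolding covered_def visible_def by metis

lemma covered_if_in_front:
  "\<lbrakk>p \<in> frontier (sq x y b); b < n; j < n; prec b j; p \<in> sq x y j\<rbrakk>
    \<Longrightarrow> covered n x y prec b p"
  by (metis covered_iff_in_front prec_irrefl)

lemma visible_not_in_front:
  "\<lbrakk>visible n x y prec b p; b < n; j < n; prec b j\<rbrakk> \<Longrightarrow> p \<notin> sq x y j"
  using covered_if_in_front unfolding covered_def visible_def by blast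

context
  fixes b f1 f2 :: nat
  assumes indices: "b < n" "f1 < n" "f2 < n" and in_front: "prec b f1" "prec b f2"
    and heights: "y f2 \<le> y b" "y b \<le> y f1" "y f1 - y f2 \<le> 1"
begin

text \<open>Below height \<open>y f1 - y b\<close> the side is covered by \<open>s f2\<close>, above it by \<open>s f1\<close>.\<close>
lemma left_side_covered_if_sandwiched:
  assumes "x f1 \<le> x b" "x f2 \<le> x b"
  shows "\<forall>t\<in>{0..1}. covered n x y prec b (left_side x y b t)"
proof
  fix t :: real assume t: "t \<in> {0..1}"
  have "left_side x y b t \<in> sq x y f1 \<or> left_side x y b t \<in> sq x y f2"
    using t assms heights x_dist[of b f1] x_dist[of b f2] indices
    by (auto simp: left_side_def mem_sq_iff)
  then show "covered n x y prec b (left_side x y b t)"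
    using covered_if_in_front[OF left_side_in_frontier[OF t]] indices in_front by blast
qed

lemma right_side_covered_if_sandwiched:
  assumes "x b \<le> x f1" "x b \<le> x f2"
  shows "\<forall>t\<in>{0..1}. covered n x y prec b (right_side x y b t)"
proof
  fix t :: real assume t: "t \<in> {0..1}"
  have "right_side x y b t \<in> sq x y f1 \<or> right_side x y b t \<in> sq x y f2"
    using t assms heights x_dist[of f1 b] x_dist[of f2 b] indices
    by (auto simp: right_side_def mem_sq_iff)
  then show "covered n x y prec b (right_side x y b t)"
    using covered_if_in_front[OF right_side_in_frontier[OF t]] indices in_front by blast
qed

lemma visible_perimeter_le_2_if_sandwiched_crosswise:
  assumes "x f1 \<le> x b \<and> x b \<le> x f2 \<or> x f2 \<le> x b \<and> x b \<le> x f1"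
  shows "visible_perimeter n x y prec b \<le> 2"
  using assms
proof
  assume x_order: "x f1 \<le> x b \<and> x b \<le> x f2"
  have hidden: "visible n x y prec b p \<Longrightarrow> p \<notin> sq x y f1 \<and> p \<notin> sq x y f2" for p
    using visible_not_in_front indices in_front by blast
  have "visible_perimeter n x y prec b
      \<le> (x f2 - x b - 0) + (1 - (x f1 + 1 - x b)) + (y f1 - y b - 0) + (1 - (1 - (y b - y f2)))"
  proof (rule visible_perimeter_le)
    show "{t\<in>{0..1}. visible n x y prec b (bottom_side x y b t)} \<subseteq> {0..x f2 - x b}"
      using x_order heights by (force simp: bottom_side_def mem_sq_iff dest: hidden)
    show "{t\<in>{0..1}. visible n x y prec b (top_side x y b t)} \<subseteq> {x f1 + 1 - x b..1}"
      using x_order heights by (force simp: top_side_def mem_sq_iff dest: hidden)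
    show "{t\<in>{0..1}. visible n x y prec b (left_side x y b t)} \<subseteq> {0..y f1 - y b}"
      using x_order heights x_dist[of b f1] indices by (force simp: left_side_def mem_sq_iff dest: hidden)
    show "{t\<in>{0..1}. visible n x y prec b (right_side x y b t)} \<subseteq> {1 - (y b - y f2)..1}"
      using x_order heights x_dist[of f2 b] indices by (force simp: right_side_def mem_sq_iff dest: hidden)
  qed (use x_order heights in auto)
  then show ?thesis using heights x_dist[of f2 f1] indices by linarith
next
  assume x_order: "x f2 \<le> x b \<and> x b \<le> x f1"
  have hidden: "visible n x y prec b p \<Longrightarrow> p \<notin> sq x y f1 \<and> p \<notin> sq x y f2" for p
    using visible_not_in_front indices in_front by blast
  have "visible_perimeter n x y prec b
      \<le> (1 - (x f2 + 1 - x b)) + (x f1 - x b - 0) + (1 - (1 - (y b - y f2))) + (y f1 - y b - 0)"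
  proof (rule visible_perimeter_le)
    show "{t\<in>{0..1}. visible n x y prec b (bottom_side x y b t)} \<subseteq> {x f2 + 1 - x b..1}"
      using x_order heights by (force simp: bottom_side_def mem_sq_iff dest: hidden)
    show "{t\<in>{0..1}. visible n x y prec b (top_side x y b t)} \<subseteq> {0..x f1 - x b}"
      using x_order heights by (force simp: top_side_def mem_sq_iff dest: hidden)
    show "{t\<in>{0..1}. visible n x y prec b (left_side x y b t)} \<subseteq> {1 - (y b - y f2)..1}"
      using x_order heights x_dist[of b f2] indices by (force simp: left_side_def mem_sq_iff dest: hidden)
    show "{t\<in>{0..1}. visible n x y prec b (right_side x y b t)} \<subseteq> {0..y f1 - y b}"
      using x_order heights x_dist[of f1 b] indices by (force simp: right_side_def mem_sq_iff dest: hidden)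
  qed (use x_order heights in auto)
  then show ?thesis using heights x_dist[of f1 f2] indices by linarith
qed

lemma standard_bad_square_if_sandwiched:
  assumes "2 < visible_perimeter n x y prec b"
  shows "standard_bad_square n x y prec b"
proof (rule standard_bad_squareI)
  consider "x f1 \<le> x b" "x f2 \<le> x b" | "x b \<le> x f1" "x b \<le> x f2"
    | "x f1 \<le> x b \<and> x b \<le> x f2 \<or> x f2 \<le> x b \<and> x b \<le> x f1"
    by linarith
  then show "(\<forall>t\<in>{0..1}. covered n x y prec b (left_side x y b t)) \<or>
             (\<forall>t\<in>{0..1}. covered n x y prec b (right_side x y b t))"
    using left_side_covered_if_sandwiched right_side_covered_if_sandwiched
      visible_perimeter_le_2_if_sandwiched_crosswise assms by cases force+
qed

end

lemma visible_perimeter_le_if_two_in_front_above: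
  assumes indices: "b < n" "f1 < n" "f2 < n" and in_front: "prec b f1" "prec b f2"
    and heights: "y b \<le> y f1" "y f1 - y b \<le> 1" "y b \<le> y f2" "y f2 - y b \<le> 1"
    and x_order: "x f1 \<le> x b" "x b \<le> x f2"
  shows "visible_perimeter n x y prec b \<le> 1 + (y f1 - y b) + (y f2 - y b)"
proof -
  have hidden: "visible n x y prec b p \<Longrightarrow> p \<notin> sq x y f1 \<and> p \<notin> sq x y f2" for p
    using visible_not_in_front indices in_front by blast
  have "visible_perimeter n x y prec b \<le> (1 - 0) + (0 - 0) + (y f1 - y b - 0) + (y f2 - y b - 0)"
  proof (rule visible_perimeter_le)
    show "{t\<in>{0..1}. visible n x y prec b (top_side x y b t)} \<subseteq> {0..0}"
      using x_order heights x_dist[of f2 f1] indices by (force simp: top_side_def mem_sq_iff dest: hidden)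
    show "{t\<in>{0..1}. visible n x y prec b (left_side x y b t)} \<subseteq> {0..y f1 - y b}"
      using x_order heights x_dist[of b f1] indices by (force simp: left_side_def mem_sq_iff dest: hidden)
    show "{t\<in>{0..1}. visible n x y prec b (right_side x y b t)} \<subseteq> {0..y f2 - y b}"
      using x_order heights x_dist[of f2 b] indices by (force simp: right_side_def mem_sq_iff dest: hidden)
  qed (use heights in auto)
  then show ?thesis by simp
qed

lemma visible_perimeter_le_if_two_in_front_below:
  assumes indices: "b < n" "f1 < n" "f2 < n" and in_front: "prec b f1" "prec b f2"
    and heights: "y f1 \<le> y b" "y b - y f1 \<le> 1" "y f2 \<le> y b" "y b - y f2 \<le> 1"
    and x_order: "x f1 \<le> x b" "x b \<le> x f2"
  shows "visible_perimeter n x y prec b \<le> 1 + (y b - y f1) + (y b - y f2)"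
proof -
  have hidden: "visible n x y prec b p \<Longrightarrow> p \<notin> sq x y f1 \<and> p \<notin> sq x y f2" for p
    using visible_not_in_front indices in_front by blast
  have "visible_perimeter n x y prec b
      \<le> (0 - 0) + (1 - 0) + (1 - (1 - (y b - y f1))) + (1 - (1 - (y b - y f2)))"
  proof (rule visible_perimeter_le)
    show "{t\<in>{0..1}. visible n x y prec b (bottom_side x y b t)} \<subseteq> {0..0}"
      using x_order heights x_dist[of f2 f1] indices by (force simp: bottom_side_def mem_sq_iff dest: hidden)
    show "{t\<in>{0..1}. visible n x y prec b (left_side x y b t)} \<subseteq> {1 - (y b - y f1)..1}"
      using x_order heights x_dist[of b f1] indices by (force simp: left_side_def mem_sq_iff dest: hidden)
    show "{t\<in>{0..1}. visible n x y prec b (right_side x y b t)} \<subseteq> {1 - (y b - y f2)..1}"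
      using x_order heights x_dist[of f2 b] indices by (force simp: right_side_def mem_sq_iff dest: hidden)
  qed (use heights in auto)
  then show ?thesis by simp
qed

end

locale uniform_narrow_layout = narrow_layout +
  fixes d :: real
  assumes step_pos: "0 < d" and step_le: "d \<le> 1/2"
    and y_step: "i + 1 < n \<Longrightarrow> y (i + 1) - y i = d"
    and gap_gt: "reasonable d n x y prec"
begin

lemma y_eq: "i < n \<Longrightarrow> y i = y 0 + real i * d"
proof (induction i)
  case (Suc i)
  then show ?case using y_step[of i] by (simp add: algebra_simps)
qed simp

lemma y_le_iff: "\<lbrakk>i < n; j < n\<rbrakk> \<Longrightarrow> y i \<le> y j \<longleftrightarrow> i \<le> j"
  using y_eq[of i] y_eq[of j] step_pos by simp

lemma visible_perimeter_gt: "i < n \<Longrightarrow> 2 + d < visible_perimeter n x y prec i"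
  using gap_gt Min_le[of "square_gap n x y prec ` {0..<n}" "square_gap n x y prec i"]
  unfolding reasonable_def layout_gap_def square_gap_def by force

lemma covered_top_corner:
  assumes "i < n" "covered n x y prec i (c, y i + 1/2)"
  obtains j where "i < j" "j < n" "prec i j" "y j - y i \<le> 1" "x j - 1/2 \<le> c" "c \<le> x j + 1/2"
proof -
  obtain j where j: "j < n" "j \<noteq> i" "prec i j" "(c, y i + 1/2) \<in> sq x y j"
    using assms covered_iff_in_front by blast
  then have "y i \<le> y j" "y j - y i \<le> 1" "x j - 1/2 \<le> c" "c \<le> x j + 1/2"
    by (auto simp: mem_sq_iff)
  with j assms(1) y_le_iff[of i j] show thesis by (intro that) auto
qed

lemma covered_bottom_corner:
  assumes "i < n" "covered n x y prec i (c, y i - 1/2)"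
  obtains j where "j < i" "prec i j" "y i - y j \<le> 1" "x j - 1/2 \<le> c" "c \<le> x j + 1/2"
proof -
  obtain j where j: "j < n" "j \<noteq> i" "prec i j" "(c, y i - 1/2) \<in> sq x y j"
    using assms covered_iff_in_front by blast
  then have "y j \<le> y i" "y i - y j \<le> 1" "x j - 1/2 \<le> c" "c \<le> x j + 1/2"
    by (auto simp: mem_sq_iff)
  with j assms(1) y_le_iff[of j i] show thesis by (intro that) auto
qed

lemma upper_neighbour_in_front_or_standard:
  assumes "i < n" "covered n x y prec i (c, y i + 1/2)"
  shows "i + 1 < n \<and> (prec i (i + 1) \<or> standard_bad_square n x y prec (i + 1))"
proof -
  obtain j where j: "i < j" "j < n" "prec i j" "y j - y i \<le> 1"
    using covered_top_corner[OF assms] by blast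
  have "standard_bad_square n x y prec (i + 1)" if behind: "\<not> prec i (i + 1)"
  proof (rule standard_bad_square_if_sandwiched[of "i + 1" j i])
    have "prec (i + 1) i" using prec_total[of i "i + 1"] behind j by simp
    then show "prec (i + 1) i" "prec (i + 1) j"
      using prec_trans[of "i + 1" i j] behind j by (auto simp: Suc_lessI)
    show "y i \<le> y (i + 1)" "y (i + 1) \<le> y j" using y_le_iff j by auto
  qed (use j visible_perimeter_gt[of "i + 1"] step_pos in auto)
  with j show ?thesis by auto
qed

lemma lower_neighbour_in_front_or_standard:
  assumes "i < n" "covered n x y prec i (c, y i - 1/2)"
  shows "0 < i \<and> (prec i (i - 1) \<or> standard_bad_square n x y prec (i - 1))"
proof -
  obtain j where j: "j < i" "prec i j" "y i - y j \<le> 1"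
    using covered_bottom_corner[OF assms] by blast
  have "standard_bad_square n x y prec (i - 1)" if behind: "\<not> prec i (i - 1)"
  proof (rule standard_bad_square_if_sandwiched[of "i - 1" i j])
    have "prec (i - 1) i" using prec_total[of i "i - 1"] behind j assms(1) by simp
    then show "prec (i - 1) i" "prec (i - 1) j"
      using prec_trans[of "i - 1" i j] behind j assms(1) by (auto simp: less_diff_conv2)
    show "y j \<le> y (i - 1)" "y (i - 1) \<le> y i" using y_le_iff j assms(1) by auto
  qed (use j assms(1) visible_perimeter_gt[of "i - 1"] step_pos in \<open>auto simp: less_imp_diff_less\<close>)
  with j show ?thesis by auto
qed

lemma top_corners_not_both_covered:
  assumes "i + 1 < n" "prec i (i + 1)"
  shows "\<not> (covered n x y prec i (x i - 1/2, y i + 1/2) \<and> covered n x y prec i (x i + 1/2, y i + 1/2))"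
proof
  assume covered: "covered n x y prec i (x i - 1/2, y i + 1/2) \<and> covered n x y prec i (x i + 1/2, y i + 1/2)"
  have i: "i < n" using assms(1) by simp
  obtain g1 where g1: "i < g1" "g1 < n" "prec i g1" "y g1 - y i \<le> 1" "x g1 - 1/2 \<le> x i - 1/2"
    using covered_top_corner[OF i conjunct1[OF covered]] by blast
  obtain g2 where g2: "i < g2" "g2 < n" "prec i g2" "y g2 - y i \<le> 1" "x i + 1/2 \<le> x g2 + 1/2"
    using covered_top_corner[OF i conjunct2[OF covered]] by blast
  have "visible_perimeter n x y prec i \<le> 2 + d"
  proof (cases "x (i + 1) \<le> x i")
    case True
    then have "visible_perimeter n x y prec i \<le> 1 + (y (i + 1) - y i) + (y g2 - y i)"
      using assms g2 y_le_iff[of i g2] y_step[of i] step_le step_pos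
      by (intro visible_perimeter_le_if_two_in_front_above) auto
    then show ?thesis using assms y_step[of i] g2 by linarith
  next
    case False
    then have "visible_perimeter n x y prec i \<le> 1 + (y g1 - y i) + (y (i + 1) - y i)"
      using assms g1 y_le_iff[of i g1] y_step[of i] step_le step_pos
      by (intro visible_perimeter_le_if_two_in_front_above) auto
    then show ?thesis using assms y_step[of i] g1 by linarith
  qed
  then show False using visible_perimeter_gt[OF i] by linarith
qed

lemma bottom_corners_not_both_covered:
  assumes "0 < i" "i < n" "prec i (i - 1)"
  shows "\<not> (covered n x y prec i (x i - 1/2, y i - 1/2) \<and> covered n x y prec i (x i + 1/2, y i - 1/2))"
proof
  assume covered: "covered n x y prec i (x i - 1/2, y i - 1/2) \<and> covered n x y prec i (x i + 1/2, y i - 1/2)"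
  have step: "y i - y (i - 1) = d" using assms y_step[of "i - 1"] by simp
  obtain g1 where g1: "g1 < i" "prec i g1" "y i - y g1 \<le> 1" "x g1 - 1/2 \<le> x i - 1/2"
    using covered_bottom_corner[OF assms(2) conjunct1[OF covered]] by blast
  obtain g2 where g2: "g2 < i" "prec i g2" "y i - y g2 \<le> 1" "x i + 1/2 \<le> x g2 + 1/2"
    using covered_bottom_corner[OF assms(2) conjunct2[OF covered]] by blast
  have "visible_perimeter n x y prec i \<le> 2 + d"
  proof (cases "x (i - 1) \<le> x i")
    case True
    then have "visible_perimeter n x y prec i \<le> 1 + (y i - y (i - 1)) + (y i - y g2)"
      using assms g2 y_le_iff[of g2 i] step step_le step_pos
      by (intro visible_perimeter_le_if_two_in_front_below) auto
    then show ?thesis using step g2 by linarith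
  next
    case False
    then have "visible_perimeter n x y prec i \<le> 1 + (y i - y g1) + (y i - y (i - 1))"
      using assms g1 y_le_iff[of g1 i] step step_le step_pos
      by (intro visible_perimeter_le_if_two_in_front_below) auto
    then show ?thesis using step g1 by linarith
  qed
  then show False using visible_perimeter_gt[OF assms(2)] by linarith
qed

lemma standard_neighbour_if_bad_square:
  assumes i: "i < n" and bad: "bad_square n x y prec i"
    and not_standard: "\<not> standard_bad_square n x y prec i"
  shows "(0 < i \<and> standard_bad_square n x y prec (i - 1)) \<or>
         (i + 1 < n \<and> standard_bad_square n x y prec (i + 1))"
  using bad
proof (cases rule: bad_square_corner_cases)
  case (top_bottom c c')
  note upper = upper_neighbour_in_front_or_standard[OF i top_bottom(1)]
    and lower = lower_neighbour_in_front_or_standard[OF i top_bottom(2)]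
  have "\<not> (prec i (i + 1) \<and> prec i (i - 1))"
  proof
    assume "prec i (i + 1) \<and> prec i (i - 1)"
    then have "standard_bad_square n x y prec i"
      using upper lower i y_step[of i] y_step[of "i - 1"] step_le visible_perimeter_gt[OF i] step_pos
      by (intro standard_bad_square_if_sandwiched[of i "i + 1" "i - 1"]) auto
    with not_standard show False ..
  qed
  with upper lower show ?thesis by blast
next
  case top
  then show ?thesis
    using upper_neighbour_in_front_or_standard[OF i top(1)] top_corners_not_both_covered by blast
next
  case bottom
  then show ?thesis
    using lower_neighbour_in_front_or_standard[OF i bottom(1)] bottom_corners_not_both_covered i by blast
qed

end

theorem lemma12:
  fixes w h k :: real and n :: nat and y x :: "nat \<Rightarrow> real" and prec :: "nat \<Rightarrow> nat \<Rightarrow> bool"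
  assumes "1 < w" "w \<le> 2" "h > 1" "k \<ge> 2"
    and "\<forall>i<n. 1/2 \<le> y i \<and> y i \<le> h - 1/2"
    and "\<forall>i. i + 1 < n \<longrightarrow> y (i + 1) - y i = 1 / k"
    and "is_layout w n x prec"
    and "reasonable (1 / k) n x y prec"
    and "i < n"
    and "bad_square n x y prec i"
    and "\<not> standard_bad_square n x y prec i"
  shows "(0 < i \<and> standard_bad_square n x y prec (i - 1)) \<or>
         (i + 1 < n \<and> standard_bad_square n x y prec (i + 1))"
proof -
  interpret uniform_narrow_layout n x y prec "1 / k"
  proof unfold_locales
    show "strict_total_order_on {0..<n} prec" using assms(7) by (simp add: is_layout_def)
    show "x i - x j \<le> 1" if "i < n" "j < n" for i j
    proof -
      have "x i \<le> w - 1/2" "1/2 \<le> x j" using assms(7) that by (auto simp: is_layout_def)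
      then show ?thesis using assms(2) by linarith
    qed
    show "0 < 1 / k" "1 / k \<le> 1 / 2" using assms(4) by (auto simp: frac_le)
    show "y (i + 1) - y i = 1 / k" if "i + 1 < n" for i using assms(6) that by blast
  qed (fact assms(8))
  show ?thesis using standard_neighbour_if_bad_square assms(9-11) by blast
qed

end
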